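(* Let $t$ be an odd prime and let $n\geq 1$ be an integer that is a quadratic nonresidue modulo $t$. Then for every $0\leq i\leq t-1$, \[ \overline{N}_{t-1}(i,t,n)=\frac{\overline{p}_{t-1}(n)}{t}\equiv 0 \pmod 2 . \] In particular, $\overline{p}_{t-1}(n)\equiv 0 \pmod{2t}$.
   Context: An overpartition of $n$ is a partition of $n$ in which the first occurrence of each distinct part size may be overlined. For an overpartition $\pi$, $\ell(\pi)$ denotes its total number of parts (overlined and non-overlined). A $(t-1)$-colored overpartition of $n$ is a tuple $\overrightarrow{\pi}=(\pi_1,\dots,\pi_{t-1})$ of overpartitions with $\sum_{k}|\pi_k|=n$, where $|\pi_k|$ is the sum of parts of $\pi_k$; $\overline{p}_{t-1}(n)$ denotes the number of such tuples. For such a tuple (with $t-1$ even) the multirank is \[ \overline{r}(\overrightarrow{\pi})=\sum_{k=1}^{(t-1)/2} k\bigl(\ell(\pi_k)-\ell(\pi_{t-k})\bigr). \] $\overline{N}_{t-1}(i,t,n)$ denotes the number of $(t-1)$-colored overpartitions of $n$ whose multirank $\overline{r}$ is congruent to $i$ modulo $t$. *)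

theory Defs
  imports "HOL-Library.Multiset" "HOL-Number_Theory.Number_Theory"
begin

text \<open>An overpartition is represented as a pair (M, O): M is the multiset of
  (positive) parts, O is the set of part sizes whose first occurrence is overlined
  (so O is a subset of the distinct part sizes).\<close>

type_synonym overpartition = "nat multiset \<times> nat set"

definition is_overpartition :: "overpartition \<Rightarrow> bool" where
  "is_overpartition \<pi> \<longleftrightarrow> 0 \<notin># fst \<pi> \<and> snd \<pi> \<subseteq> set_mset (fst \<pi>)"

definition op_size :: "overpartition \<Rightarrow> nat" where
  "op_size \<pi> = sum_mset (fst \<pi>)"

definition op_len :: "overpartition \<Rightarrow> nat" where
  "op_len \<pi> = size (fst \<pi>)"

definition colored_overpartitions :: "nat \<Rightarrow> nat \<Rightarrow> (nat \<Rightarrow> overpartition) set" where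
  "colored_overpartitions t n =
     {F. F \<in> {1..t-1} \<rightarrow>\<^sub>E Collect is_overpartition \<and> (\<Sum>k\<in>{1..t-1}. op_size (F k)) = n}"

definition pbar :: "nat \<Rightarrow> nat \<Rightarrow> nat" where
  "pbar t n = card (colored_overpartitions t n)"

definition multirank :: "nat \<Rightarrow> (nat \<Rightarrow> overpartition) \<Rightarrow> int" where
  "multirank t F =
     (\<Sum>k\<in>{1..(t-1) div 2}. int k * (int (op_len (F k)) - int (op_len (F (t - k)))))"

definition Nbar :: "int \<Rightarrow> nat \<Rightarrow> nat \<Rightarrow> nat" where
  "Nbar i t n = card {F \<in> colored_overpartitions t n. [multirank t F = i] (mod int t)}"

end

theory Submission
  imports Defs "HOL-Computational_Algebra.Polynomial_FPS"
begin

text \<open>Weight a \<open>(t-1)\<close>-colored overpartition \<open>F\<close> by \<open>z\<^sup>r\<^sup>(\<^sup>F\<^sup>)\<close> for a \<open>t\<close>-th root of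
  unity \<open>z\<close>. Recording, for each part size \<open>s\<close> and colour \<open>c\<close>, the multiplicity of \<open>s\<close> and
  whether it is overlined, the weighted count of the overpartitions of \<open>n\<close> becomes the \<open>n\<close>-th
  coefficient of \<open>\<Prod>\<^sub>s \<Prod>\<^sub>c (1 + z\<^sup>c q\<^sup>s) / (1 - z\<^sup>c q\<^sup>s)\<close>; only \<open>r(F) mod t\<close> matters.
  For \<open>z \<noteq> 1\<close> the \<open>z\<^sup>c\<close> run through all non-trivial \<open>t\<close>-th roots of unity, and the product
  collapses to a power series in \<open>q\<^sup>t\<close> times \<open>\<Prod>\<^sub>s (1 - q\<^sup>s) / (1 + q\<^sup>s)\<close>. By Gauss's identity,
  obtained here from a finite Jacobi triple product (Cauchy's q-binomial theorem), the latter has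
  non-zero coefficients only at squares; as \<open>n - t j\<close> is a non-residue, hence never a square,
  the twisted count vanishes. Orthogonality of the roots of unity then gives
  \<open>t N(i, t, n) = p(n)\<close> for every \<open>i\<close>. For \<open>z = 1\<close> every factor is \<open>1 + 2(\<dots>)\<close>, so \<open>p(n)\<close>
  is even, and so is \<open>N(i, t, n)\<close> since \<open>t\<close> is odd.\<close>

unbundle fps_syntax

(* keeps identities between power series in q from being turned into polynomial identities *)
declare [[simproc del: poly_fps_eq]]

section \<open>Gaussian binomial coefficients\<close>

fun qbinom :: "'a::comm_ring_1 \<Rightarrow> nat \<Rightarrow> nat \<Rightarrow> 'a" where
  "qbinom Q 0 k = (if k = 0 then 1 else 0)"
| "qbinom Q (Suc N) k = qbinom Q N k + (if k = 0 then 0 else Q^(Suc N - k) * qbinom Q N (k-1))"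

lemma qbinom_eq_0: "N < k \<Longrightarrow> qbinom Q N k = 0"
  by (induction N arbitrary: k) auto

lemma qbinom_0_right [simp]: "qbinom Q N 0 = 1"
  by (induction N) auto

lemma qbinomial_theorem:
  "(\<Sum>k\<le>N. (-1)^k * Q^(k*(k-1) div 2) * qbinom Q N k * z^k * w^(N-k)) = (\<Prod>i<N. w - z*Q^i)"
proof (induction N)
  case 0
  then show ?case by simp
next
  case (Suc N)
  define f where "f k = (-1)^k * Q^(k*(k-1) div 2) * qbinom Q N k * z^k * w^(N-k)" for k
  have old: "(\<Sum>k\<le>Suc N. (-1)^k * Q^(k*(k-1) div 2) * qbinom Q N k * z^k * w^(Suc N-k))
      = w * (\<Sum>k\<le>N. f k)"
    by (simp add: qbinom_eq_0 sum_distrib_left f_def Suc_diff_le mult_ac)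
  have shifted: "(\<Sum>k\<le>Suc N. (-1)^k * Q^(k*(k-1) div 2)
        * (if k = 0 then 0 else Q^(Suc N - k) * qbinom Q N (k-1)) * z^k * w^(Suc N-k))
     = (\<Sum>k\<le>N. (-1)^(Suc k) * Q^(Suc k*k div 2) * (Q^(N - k) * qbinom Q N k) * z^(Suc k) * w^(N-k))"
    by (subst sum.atMost_Suc_shift) simp
  have new_term: "(-1)^(Suc k) * Q^(Suc k*k div 2) * (Q^(N - k) * qbinom Q N k) * z^(Suc k) * w^(N-k)
      = - (z * Q^N) * f k" if k: "k \<le> N" for k
  proof -
    have "Suc k * k = k*(k-1) + 2*k" by (cases k) auto
    hence "Suc k * k div 2 + (N - k) = k*(k-1) div 2 + N" using k by simp
    hence "Q^(Suc k*k div 2) * Q^(N - k) = Q^(k*(k-1) div 2) * Q^N"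
      by (simp only: power_add[symmetric])
    thus ?thesis unfolding f_def by (simp add: algebra_simps)
  qed
  have "(\<Sum>k\<le>Suc N. (-1)^k * Q^(k*(k-1) div 2) * qbinom Q (Suc N) k * z^k * w^(Suc N-k))
     = (\<Sum>k\<le>Suc N. (-1)^k * Q^(k*(k-1) div 2) * qbinom Q N k * z^k * w^(Suc N-k))
     + (\<Sum>k\<le>Suc N. (-1)^k * Q^(k*(k-1) div 2)
         * (if k = 0 then 0 else Q^(Suc N - k) * qbinom Q N (k-1)) * z^k * w^(Suc N-k))"
    by (simp add: algebra_simps sum.distrib[symmetric])
  also have "\<dots> = w * (\<Sum>k\<le>N. f k) - (z * Q^N) * (\<Sum>k\<le>N. f k)"
    using old shifted new_term by (simp add: sum_distrib_left sum_negf)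
  also have "\<dots> = (\<Prod>i<Suc N. w - z*Q^i)"
    using Suc by (simp add: f_def algebra_simps)
  finally show ?case .
qed

definition qpoch :: "'a::comm_ring_1 \<Rightarrow> nat \<Rightarrow> 'a" where
  "qpoch Q n = (\<Prod>i\<in>{1..n}. 1 - Q^i)"

lemma qpoch_0 [simp]: "qpoch Q 0 = 1"
  by (simp add: qpoch_def)

lemma qpoch_Suc: "qpoch Q (Suc n) = qpoch Q n * (1 - Q^Suc n)"
  by (simp add: qpoch_def)

lemma qbinom_qpoch: "k \<le> N \<Longrightarrow> qbinom Q N k * qpoch Q k * qpoch Q (N-k) = qpoch Q N"
proof (induction N arbitrary: k)
  case 0
  then show ?case by simp
next
  case (Suc N)
  consider "k = 0" | "k = Suc N" | k' where "k = Suc k'" "k \<le> N"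
    using Suc.prems by (cases k) (auto simp: le_Suc_eq)
  then show ?case
  proof cases
    case 1
    then show ?thesis by simp
  next
    case 2
    have "qbinom Q N N * qpoch Q N = qpoch Q N" using Suc.IH[of N] by simp
    moreover have "qbinom Q (Suc N) (Suc N) = qbinom Q N N" using qbinom_eq_0[of N "Suc N" Q] by simp
    ultimately show ?thesis using 2 by (simp add: qpoch_Suc) (metis mult.assoc)
  next
    case (3 k')
    have k: "qbinom Q N k * qpoch Q k * qpoch Q (N-k) = qpoch Q N" using Suc.IH 3 by simp
    have k'_eq: "qbinom Q N k' * qpoch Q k' * qpoch Q (Suc N - k) = qpoch Q N"
      using Suc.IH[of k'] 3 by simp
    have "qbinom Q (Suc N) k * qpoch Q k * qpoch Q (Suc N - k)
        = (qbinom Q N k * qpoch Q k * qpoch Q (N-k)) * (1 - Q^(Suc N - k))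
          + Q^(Suc N - k) * (qbinom Q N k' * qpoch Q k' * qpoch Q (Suc N - k)) * (1 - Q^k)"
    proof -
      have "qpoch Q (Suc N - k) = qpoch Q (N-k) * (1 - Q^(Suc N - k))"
        using 3(2) by (simp only: Suc_diff_le qpoch_Suc)
      moreover have "qpoch Q k = qpoch Q k' * (1 - Q^k)" using 3 by (simp add: qpoch_Suc)
      moreover have "qbinom Q (Suc N) k = qbinom Q N k + Q^(Suc N - k) * qbinom Q N k'"
        using 3 by simp
      ultimately show ?thesis by (simp only:) (simp add: algebra_simps)
    qed
    also have "\<dots> = qpoch Q N * (1 - Q^(Suc N - k) * Q^k)"
      unfolding k k'_eq by (simp add: algebra_simps)
    also have "Q^(Suc N - k) * Q^k = Q^(Suc N)" using 3(2) by (simp flip: power_add)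
    finally show ?thesis by (simp add: qpoch_Suc)
  qed
qed

definition fps_eq_below :: "nat \<Rightarrow> 'a::comm_ring_1 fps \<Rightarrow> 'a fps \<Rightarrow> bool" where
  "fps_eq_below m f g \<longleftrightarrow> (\<forall>i<m. f $ i = g $ i)"

lemma fps_eq_below_refl [simp]: "fps_eq_below m f f"
  by (simp add: fps_eq_below_def)

lemma fps_eq_below_sym: "fps_eq_below m f g \<Longrightarrow> fps_eq_below m g f"
  by (simp add: fps_eq_below_def)

lemma fps_eq_below_trans: "fps_eq_below m f g \<Longrightarrow> fps_eq_below m g h \<Longrightarrow> fps_eq_below m f h"
  by (simp add: fps_eq_below_def)

lemma fps_eq_below_mult:
  "fps_eq_below m f f' \<Longrightarrow> fps_eq_below m g g' \<Longrightarrow> fps_eq_below m (f*g) (f'*g')"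
  unfolding fps_eq_below_def fps_mult_nth by (auto intro!: sum.cong)

lemma fps_eq_below_sum:
  "(\<And>x. x \<in> A \<Longrightarrow> fps_eq_below m (f x) (g x)) \<Longrightarrow> fps_eq_below m (sum f A) (sum g A)"
  unfolding fps_eq_below_def fps_sum_nth by (auto intro!: sum.cong)

lemma fps_eq_below_X_power_mult: "m \<le> e \<Longrightarrow> fps_eq_below m (fps_X^e * f) 0"
  unfolding fps_eq_below_def by (simp add: fps_X_power_mult_nth)

lemma fps_eq_below_one_minus_X_power: "m \<le> e \<Longrightarrow> fps_eq_below m (1 - fps_X^e) 1"
  unfolding fps_eq_below_def by (simp add: fps_X_power_nth)

lemma fps_eq_below_cancel:
  fixes R :: "'a::field fps"
  assumes "R $ 0 \<noteq> 0" "fps_eq_below m (f*R) (g*R)"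
  shows "fps_eq_below m f g"
proof -
  have "fps_eq_below m ((f*R) * inverse R) ((g*R) * inverse R)"
    using assms(2) by (simp add: fps_eq_below_mult)
  thus ?thesis using inverse_mult_eq_1'[OF assms(1)] by (simp add: mult.assoc)
qed

section \<open>Gauss's identity\<close>

abbreviation q :: "complex fps" where "q \<equiv> fps_X"

definition odd_qpoch :: "nat \<Rightarrow> complex fps" where "odd_qpoch n = (\<Prod>i<n. 1 - q^(2*i+1))"

definition absdiff :: "nat \<Rightarrow> nat \<Rightarrow> nat" where "absdiff k n = (if k \<le> n then n - k else k - n)"

lemma prod_lessThan_add: "(\<Prod>i<(n::nat)+m. f i) = (\<Prod>i<n. f i) * (\<Prod>i<m. f (n+i))"
  by (induction m) (simp_all add: mult_ac)

lemma sum_odd_eq_square: "(\<Sum>i<n. 2*i+1) = (n::nat)^2"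
  by (induction n) (simp_all add: power2_eq_square algebra_simps)

lemma qbinom_theta_exponent:
  assumes "k \<le> 2*n"
  shows "2 * (k*(k-1) div 2) + k + 2*n*(2*n-k) = absdiff k n ^ 2 + 3*n^2"
proof -
  have ev: "even (k*(k-1))" by (simp; presburger)
  have "2 * (k*(k-1) div 2) + k = k*k"
    using ev by (cases k) (auto simp: algebra_simps)
  moreover have "k*k + 2*n*(2*n-k) = absdiff k n ^ 2 + 3*n^2"
  proof (cases "k \<le> n")
    case True
    then obtain d where d: "n = k + d" by (metis le_add_diff_inverse)
    have "2*n - k = k + 2*d" using d by simp
    thus ?thesis using d True by (simp add: absdiff_def power2_eq_square algebra_simps)
  next
    case False
    then obtain d where d: "k = n + d" by (metis le_add_diff_inverse nat_le_linear)
    with assms have dn: "d \<le> n" by simp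
    then obtain e where e: "n = d + e" by (metis le_add_diff_inverse)
    have "2*n - k = e" using d e by simp
    thus ?thesis using d e False by (simp add: absdiff_def power2_eq_square algebra_simps)
  qed
  ultimately show ?thesis by simp
qed

lemma qbinom_theta_lhs:
  "(\<Sum>k\<le>2*n. (-1)^k * (q^2)^(k*(k-1) div 2) * qbinom (q^2) (2*n) k * q^k * (q^(2*n))^(2*n-k))
     = q^(3*n^2) * (\<Sum>k\<le>2*n. (-1)^k * q^(absdiff k n ^ 2) * qbinom (q^2) (2*n) k)"
  unfolding sum_distrib_left
proof (intro sum.cong refl)
  fix k assume "k \<in> {..2*n}"
  hence e: "2 * (k*(k-1) div 2) + k + 2*n*(2*n-k) = absdiff k n ^ 2 + 3*n^2"
    using qbinom_theta_exponent by simp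
  have "(q^2)^(k*(k-1) div 2) * q^k * (q^(2*n))^(2*n-k) = q^(2 * (k*(k-1) div 2) + k + 2*n*(2*n-k))"
    by (simp add: power_mult[symmetric] power_add)
  also have "\<dots> = q^(absdiff k n ^ 2 + 3*n^2)" by (simp only: e)
  also have "\<dots> = q^(3*n^2) * q^(absdiff k n ^ 2)" by (simp only: power_add mult.commute)
  finally show "(-1)^k * (q^2)^(k*(k-1) div 2) * qbinom (q^2) (2*n) k * q^k * (q^(2*n))^(2*n-k)
      = q^(3*n^2) * ((-1)^k * q^(absdiff k n ^ 2) * qbinom (q^2) (2*n) k)"
    by (simp add: mult_ac)
qed

lemma qbinom_theta_rhs:
  "(\<Prod>i<2*n. q^(2*n) - q*(q^2)^i) = q^(3*n^2) * ((-1)^n * odd_qpoch n * odd_qpoch n)"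
proof -
  have lower: "(\<Prod>i<n. q^(2*n) - q*(q^2)^i) = (-1)^n * q^(n^2) * odd_qpoch n"
  proof -
    have "(\<Prod>i<n. q^(2*n) - q*(q^2)^i) = (\<Prod>i<n. (- (q^(2*i+1))) * (1 - q^(2*(n - Suc i)+1)))"
    proof (intro prod.cong refl)
      fix i assume "i \<in> {..<n}"
      hence "2*n = (2*i+1) + (2*(n - Suc i)+1)" by simp
      hence "q^(2*n) = q^(2*i+1) * q^(2*(n - Suc i)+1)" by (metis power_add)
      moreover have "q*(q^2)^i = q^(2*i+1)" by (simp add: power_mult[symmetric])
      ultimately show "q^(2*n) - q*(q^2)^i = (- (q^(2*i+1))) * (1 - q^(2*(n - Suc i)+1))"
        by (simp add: algebra_simps)
    qed
    moreover have "(\<Prod>i<n. - (q^(2*i+1))) = (-1)^n * q^(n^2)"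
      by (simp only: prod_uminus power_sum[symmetric] sum_odd_eq_square card_lessThan)
    moreover have "(\<Prod>i<n. 1 - q^(2*(n - Suc i)+1)) = odd_qpoch n"
      unfolding odd_qpoch_def by (rule prod.nat_diff_reindex)
    ultimately show ?thesis by (simp only: prod.distrib)
  qed
  have upper: "(\<Prod>i<n. q^(2*n) - q*(q^2)^(n+i)) = q^(2*n*n) * odd_qpoch n"
  proof -
    have "q^(2*n) - q*(q^2)^(n+i) = q^(2*n) * (1 - q^(2*i+1))" for i
      by (simp add: power_mult[symmetric] power_add[symmetric] algebra_simps)
    thus ?thesis by (simp add: prod.distrib odd_qpoch_def power_mult[symmetric] mult.commute)
  qed
  have "(\<Prod>i<2*n. q^(2*n) - q*(q^2)^i)
      = (\<Prod>i<n. q^(2*n) - q*(q^2)^i) * (\<Prod>i<n. q^(2*n) - q*(q^2)^(n+i))"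
    using prod_lessThan_add[of "\<lambda>i. q^(2*n) - q*(q^2)^i" n n] by (simp add: mult_2)
  also have "\<dots> = q^(n^2 + 2*n*n) * ((-1)^n * odd_qpoch n * odd_qpoch n)"
    unfolding lower upper by (simp add: power_add mult_ac)
  also have "n^2 + 2*n*n = 3*n^2" by (simp add: power2_eq_square)
  finally show ?thesis .
qed

text \<open>Cauchy's q-binomial theorem at \<open>Q = q\<^sup>2\<close>, \<open>z = q\<close>, \<open>w = q\<^sup>2\<^sup>n\<close>; both
  sides then carry the factor \<open>q\<^sup>3\<^sup>n\<^sup>2\<close>.\<close>

lemma qbinom_theta_identity:
  "(\<Sum>k\<le>2*n. (-1)^k * q^(absdiff k n ^ 2) * qbinom (q^2) (2*n) k) = (-1)^n * odd_qpoch n * odd_qpoch n"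
proof -
  have "q^(3*n^2) * (\<Sum>k\<le>2*n. (-1)^k * q^(absdiff k n ^ 2) * qbinom (q^2) (2*n) k)
      = q^(3*n^2) * ((-1)^n * odd_qpoch n * odd_qpoch n)"
    using qbinomial_theorem[where N="2*n" and Q="q^2" and z=q and w="q^(2*n)"]
      qbinom_theta_lhs qbinom_theta_rhs
    by simp
  thus ?thesis by simp
qed

text \<open>\<open>op_factor y s = (1 + y q\<^sup>s) / (1 - y q\<^sup>s) = 1 + 2 \<Sum>\<^sub>m\<^sub>\<ge>\<^sub>1 y\<^sup>m q\<^sup>s\<^sup>m\<close> enumerates the
  possible occurrences of the part \<open>s\<close> in one overpartition, \<open>y\<close> marking their number: the
  factor 2 is the choice of overlining the first occurrence.\<close>

definition op_factor :: "complex \<Rightarrow> nat \<Rightarrow> complex fps" where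
  "op_factor y s = Abs_fps (\<lambda>n. if n = 0 then 1 else if s dvd n then 2 * y^(n div s) else 0)"

lemma op_factor_mult:
  assumes s: "0 < s"
  shows "op_factor y s * (1 - fps_const y * q^s) = 1 + fps_const y * q^s"
proof -
  have "(op_factor y s - fps_const y * (q^s * op_factor y s)) $ n = (1 + fps_const y * q^s) $ n" for n
  proof (cases "s < n")
    case True
    have "y * y ^ ((n - s) div s) = y ^ (n div s)"
      using True s by (simp add: le_div_geq)
    then show ?thesis
      using True s by (auto simp: op_factor_def fps_X_power_mult_nth fps_X_power_nth dvd_minus_self)
  next
    case False
    then show ?thesis
      using s by (auto simp: op_factor_def fps_X_power_mult_nth fps_X_power_nth dest: dvd_imp_le)
  qed
  hence "op_factor y s - fps_const y * (q^s * op_factor y s) = 1 + fps_const y * q^s"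
    by (rule fps_ext)
  thus ?thesis by (simp add: algebra_simps)
qed

lemma op_factor_minus_one_mult: "0 < s \<Longrightarrow> op_factor (-1) s * (1 + q^s) = 1 - q^s"
  using op_factor_mult[of s "-1"] by (simp add: fps_const_neg[symmetric])

definition gauss_product :: "nat \<Rightarrow> complex fps" where
  "gauss_product M = (\<Prod>s\<in>{1..M}. op_factor (-1) s)"

definition euler_product :: "nat \<Rightarrow> complex fps" where
  "euler_product M = (\<Prod>s\<in>{1..M}. 1 - q^s)"

lemma euler_product_Suc: "euler_product (Suc M) = euler_product M * (1 - q^Suc M)"
  by (simp add: euler_product_def)

lemma gauss_product_qpoch: "gauss_product M * qpoch (q^2) M = euler_product M * euler_product M"
proof -
  have "gauss_product M * qpoch (q^2) M = (\<Prod>s\<in>{1..M}. op_factor (-1) s * (1 - (q^2)^s))"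
    by (simp add: gauss_product_def qpoch_def prod.distrib)
  also have "\<dots> = (\<Prod>s\<in>{1..M}. (1 - q^s) * (1 - q^s))"
  proof (intro prod.cong refl)
    fix s assume "s \<in> {1..M}"
    hence "0 < s" by simp
    have "(q^2)^s = q^s * q^s" by (simp add: power_mult[symmetric] mult_2 power_add)
    hence "(1 - (q^2)^s) = (1 + q^s) * (1 - q^s)" by (simp add: algebra_simps)
    hence "op_factor (-1) s * (1 - (q^2)^s) = (op_factor (-1) s * (1 + q^s)) * (1 - q^s)"
      by (simp add: mult.assoc)
    thus "op_factor (-1) s * (1 - (q^2)^s) = (1 - q^s) * (1 - q^s)"
      using op_factor_minus_one_mult[OF \<open>0 < s\<close>] by simp
  qed
  also have "\<dots> = euler_product M * euler_product M"
    by (simp add: euler_product_def prod.distrib)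
  finally show ?thesis .
qed

lemma euler_product_double: "euler_product (2*n) = odd_qpoch n * qpoch (q^2) n"
proof (induction n)
  case 0
  then show ?case by (simp add: euler_product_def odd_qpoch_def qpoch_def)
next
  case (Suc n)
  have p1: "(q^2)^(Suc n) = q^(2*n+2)"
    by (simp only: power_mult[symmetric] mult_Suc_right add.commute[of 2])
  have "euler_product (2 * Suc n) = euler_product (2*n) * (1 - q^(2*n+1)) * (1 - q^(2*n+2))"
    by (simp add: euler_product_Suc)
  also have "\<dots> = (odd_qpoch n * (1 - q^(2*n+1))) * (qpoch (q^2) n * (1 - (q^2)^(Suc n)))"
    unfolding Suc.IH p1 by (simp only: mult_ac)
  also have "\<dots> = odd_qpoch (Suc n) * qpoch (q^2) (Suc n)"
    by (simp add: odd_qpoch_def qpoch_Suc)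
  finally show ?case .
qed

lemma euler_product_eq_below:
  assumes "a \<le> b" "m \<le> Suc a"
  shows "fps_eq_below m (euler_product b) (euler_product a)"
  using assms(1)
proof (induction b rule: dec_induct)
  case (step b)
  have "fps_eq_below m (1 - q^Suc b) 1"
    using step(1) assms(2) by (intro fps_eq_below_one_minus_X_power) simp
  from fps_eq_below_mult[OF step.IH this] show ?case by (simp add: euler_product_Suc)
qed simp

lemma qpoch_eq_below:
  assumes "K \<le> a" "m \<le> 2*K+2"
  shows "fps_eq_below m (qpoch (q^2) a) (qpoch (q^2) K)"
  using assms(1)
proof (induction a rule: dec_induct)
  case (step a)
  have "fps_eq_below m (1 - q^(2 * Suc a)) 1"
    using step(1) assms(2) by (intro fps_eq_below_one_minus_X_power) simp
  from fps_eq_below_mult[OF step.IH this] show ?case by (simp only: qpoch_Suc power_mult mult_1_right)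
qed simp

lemma qpoch_nth_0: "qpoch (q^2) n $ 0 = 1"
  by (induction n) (simp_all add: qpoch_Suc qpoch_def[of _ 0])

lemma qbinom_eq_below_one:
  assumes "K \<le> k" "k \<le> N" "K \<le> N - k" "m \<le> 2*K+2"
  shows "fps_eq_below m (qbinom (q^2) N k * qpoch (q^2) K) 1"
proof -
  let ?P = "qpoch (q^2)"
  have "fps_eq_below m (qbinom (q^2) N k * ?P k * ?P (N-k)) (qbinom (q^2) N k * ?P K * ?P K)"
    using assms by (intro fps_eq_below_mult qpoch_eq_below fps_eq_below_refl) auto
  moreover have "qbinom (q^2) N k * ?P k * ?P (N-k) = ?P N" using qbinom_qpoch assms by blast
  moreover have "fps_eq_below m (?P N) (1 * ?P K)" using assms by (simp add: qpoch_eq_below)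
  ultimately have "fps_eq_below m ((qbinom (q^2) N k * ?P K) * ?P K) (1 * ?P K)"
    by (simp add: fps_eq_below_def)
  thus ?thesis by (rule fps_eq_below_cancel[rotated]) (simp add: qpoch_nth_0)
qed

definition theta_partial :: "nat \<Rightarrow> complex fps" where
  "theta_partial n = (\<Sum>k\<le>2*n. (-1)^k * q^(absdiff k n ^ 2))"

lemma theta_partial_eq_below:
  assumes m: "0 < m"
  shows "fps_eq_below m (theta_partial (2*m)) (odd_qpoch (2*m) * odd_qpoch (2*m) * qpoch (q^2) m)"
proof -
  define n where "n = 2*m"
  define B where "B k = qbinom (q^2) (2*n) k * qpoch (q^2) m" for k
  have "fps_eq_below m ((-1)^k * q^(absdiff k n ^ 2)) ((-1)^k * q^(absdiff k n ^ 2) * B k)"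
    if k: "k \<in> {..2*n}" for k
  proof (cases "m \<le> absdiff k n ^ 2")
    case True
    have "fps_eq_below m (q^(absdiff k n ^ 2) * (-1)^k) (q^(absdiff k n ^ 2) * ((-1)^k * B k))"
      using fps_eq_below_X_power_mult[OF True] by (metis fps_eq_below_sym fps_eq_below_trans)
    thus ?thesis by (simp add: mult_ac)
  next
    case False
    have "absdiff k n \<le> absdiff k n ^ 2" by (simp add: power2_eq_square)
    with False have "absdiff k n < m" by simp
    hence "m \<le> k" "k \<le> 2*n" "m \<le> 2*n - k"
      using k by (auto simp: absdiff_def n_def split: if_splits)
    hence "fps_eq_below m (B k) 1" unfolding B_def by (intro qbinom_eq_below_one) auto
    hence "fps_eq_below m ((-1)^k * q^(absdiff k n ^ 2) * B k) ((-1)^k * q^(absdiff k n ^ 2) * 1)"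
      by (intro fps_eq_below_mult fps_eq_below_refl)
    thus ?thesis by (simp add: fps_eq_below_sym)
  qed
  hence "fps_eq_below m (theta_partial n) (\<Sum>k\<le>2*n. (-1)^k * q^(absdiff k n ^ 2) * B k)"
    unfolding theta_partial_def by (rule fps_eq_below_sum)
  also have "(\<Sum>k\<le>2*n. (-1)^k * q^(absdiff k n ^ 2) * B k)
      = (\<Sum>k\<le>2*n. (-1)^k * q^(absdiff k n ^ 2) * qbinom (q^2) (2*n) k) * qpoch (q^2) m"
    by (simp add: B_def sum_distrib_right mult.assoc)
  also have "\<dots> = odd_qpoch n * odd_qpoch n * qpoch (q^2) m"
    using qbinom_theta_identity[of n] by (simp add: n_def)
  finally show ?thesis by (simp add: n_def)
qed

text \<open>Below order \<open>m\<close>, both series agree with \<open>odd_qpoch n\<^sup>2 * qpoch (q\<^sup>2) (m - 1)\<close>,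
  the truncated Jacobi triple product: for the theta series this is the finite identity above,
  for the Gauss product it follows from \<open>euler_product (2 * n) = odd_qpoch n * qpoch (q\<^sup>2) n\<close>.\<close>

lemma gauss_product_eq_below_theta:
  assumes m: "0 < m" "m \<le> Suc M"
  shows "fps_eq_below m (gauss_product M) (theta_partial (2*m))"
proof -
  define n where "n = 2*m"
  define S where "S = qpoch (q^2) (m-1)"
  have S0: "S $ 0 \<noteq> 0" by (simp add: S_def qpoch_nth_0)
  have qpoch_S: "fps_eq_below m (qpoch (q^2) a) S" if "m - 1 \<le> a" for a
    unfolding S_def using that by (intro qpoch_eq_below) auto
  have "fps_eq_below m (euler_product M) (euler_product (2*n))"
    using euler_product_eq_below[of "m-1" M m] euler_product_eq_below[of "m-1" "2*n" m] m
    by (simp add: n_def fps_eq_below_def)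
  moreover have "fps_eq_below m (euler_product (2*n)) (odd_qpoch n * S)"
    unfolding euler_product_double using qpoch_S[of n] by (intro fps_eq_below_mult) (auto simp: n_def)
  ultimately have "fps_eq_below m (euler_product M) (odd_qpoch n * S)"
    by (rule fps_eq_below_trans)
  hence "fps_eq_below m (gauss_product M * qpoch (q^2) M) ((odd_qpoch n * S) * (odd_qpoch n * S))"
    unfolding gauss_product_qpoch by (intro fps_eq_below_mult)
  moreover have "fps_eq_below m (gauss_product M * S) (gauss_product M * qpoch (q^2) M)"
    using qpoch_S[of M] m by (intro fps_eq_below_mult) (auto simp: fps_eq_below_sym)
  ultimately have "fps_eq_below m (gauss_product M * S) ((odd_qpoch n * S) * (odd_qpoch n * S))"
    by (rule fps_eq_below_trans[rotated])
  also have "(odd_qpoch n * S) * (odd_qpoch n * S) = (odd_qpoch n * odd_qpoch n * S) * S"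
    by (simp add: mult_ac)
  finally have gauss: "fps_eq_below m (gauss_product M) (odd_qpoch n * odd_qpoch n * S)"
    using S0 by (rule fps_eq_below_cancel[rotated])
  have "fps_eq_below m (odd_qpoch n * odd_qpoch n * qpoch (q^2) m) (odd_qpoch n * odd_qpoch n * S)"
    using qpoch_S[of m] by (intro fps_eq_below_mult) auto
  hence "fps_eq_below m (theta_partial n) (odd_qpoch n * odd_qpoch n * S)"
    using theta_partial_eq_below[OF m(1)] unfolding n_def by (rule fps_eq_below_trans[rotated])
  with gauss show ?thesis unfolding n_def by (simp add: fps_eq_below_def)
qed

lemma gauss_product_nth_nonsquare:
  assumes "j \<le> M" "\<forall>a. j \<noteq> a^2"
  shows "gauss_product M $ j = 0"
proof -
  have "fps_eq_below (Suc j) (gauss_product M) (theta_partial (2*Suc j))"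
    using assms by (intro gauss_product_eq_below_theta) auto
  hence "gauss_product M $ j = theta_partial (2*Suc j) $ j" by (simp add: fps_eq_below_def)
  also have "\<dots> = 0" unfolding theta_partial_def fps_sum_nth
  proof (intro sum.neutral ballI)
    fix k
    have "((-1::complex fps)^k * q^(absdiff k n ^ 2)) $ j = (-1)^k * (q^(absdiff k n ^ 2)) $ j" for n
      by (cases "even k") simp_all
    thus "((-1::complex fps)^k * q^(absdiff k (2*Suc j) ^ 2)) $ j = 0"
      using assms(2) by (simp add: fps_X_power_nth)
  qed
  finally show ?thesis .
qed

section \<open>Roots of unity\<close>

definition unit_roots :: "nat \<Rightarrow> complex set" where "unit_roots t = {w. w^t = 1}"

lemma finite_unit_roots: "0 < t \<Longrightarrow> finite (unit_roots t)"
  unfolding unit_roots_def by (rule finite_roots_unity) simp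

lemma card_unit_roots: "0 < t \<Longrightarrow> card (unit_roots t) = t"
  unfolding unit_roots_def by (rule card_roots_unity_eq)

lemma one_in_unit_roots: "1 \<in> unit_roots t" by (simp add: unit_roots_def)

lemma unit_root_eq_1_if_coprime:
  fixes w :: complex
  assumes "w^t = 1" "w^d = 1" "coprime d t"
  shows "w = 1"
proof (cases "d = 0")
  case True
  then show ?thesis using assms by simp
next
  case False
  obtain x y where "d * x = t * y + gcd d t" using bezout_nat[OF False] by blast
  hence "d * x = t * y + 1" using assms(3) by simp
  hence "(w^d)^x = (w^t)^y * w" by (simp flip: power_mult add: power_add)
  thus ?thesis using assms(1,2) by simp
qed

lemma unit_root_power_eq_1_prime:
  fixes w :: complex
  assumes "prime t" "w \<in> unit_roots t" "w^d = 1" "0 < d" "d < t"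
  shows "w = 1"
proof -
  have "coprime d t"
    using assms(1,4,5) by (metis coprime_commute nat_dvd_not_less prime_imp_coprime)
  thus ?thesis using assms(2,3) unit_root_eq_1_if_coprime by (auto simp: unit_roots_def)
qed

lemma bij_betw_power_unit_roots:
  assumes "prime t" "0 < k" "k < t"
  shows "bij_betw (\<lambda>w. w^k) (unit_roots t) (unit_roots t)"
proof -
  have t: "0 < t" using assms(1) prime_gt_0_nat by blast
  have maps: "(\<lambda>w. w^k) ` unit_roots t \<subseteq> unit_roots t"
  proof
    fix v assume "v \<in> (\<lambda>w. w^k) ` unit_roots t"
    then obtain w where "w^t = 1" "v = w^k" by (auto simp: unit_roots_def)
    have "v^t = (w^t)^k" unfolding \<open>v = w^k\<close> by (simp only: power_mult[symmetric] mult.commute)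
    thus "v \<in> unit_roots t" using \<open>w^t = 1\<close> by (simp add: unit_roots_def)
  qed
  have "inj_on (\<lambda>w. w^k) (unit_roots t)"
  proof (rule inj_onI)
    fix v w assume v: "v \<in> unit_roots t" and w: "w \<in> unit_roots t" and eq: "v^k = w^k"
    have w0: "w \<noteq> 0" using w t by (auto simp: unit_roots_def zero_power)
    have "v / w \<in> unit_roots t" using v w by (simp add: unit_roots_def power_divide)
    moreover have "(v / w)^k = 1" using eq w0 by (simp add: power_divide)
    ultimately have "v / w = 1" using unit_root_power_eq_1_prime assms by blast
    thus "v = w" using w0 by simp
  qed
  thus ?thesis using maps finite_unit_roots[OF t] by (simp add: bij_betw_def endo_inj_surj)
qed

lemma power_int_unit_root:
  fixes w :: complex
  assumes "0 < t" "w^t = 1"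
  shows "w powi a = w ^ nat (a mod int t)"
proof -
  have w0: "w \<noteq> 0" using assms by (auto simp: zero_power)
  have "w powi a = w powi (int t * (a div int t)) * w powi (a mod int t)"
    using w0 by (simp flip: power_int_add)
  also have "w powi (int t * (a div int t)) = 1" by (simp add: power_int_mult assms(2))
  also have "a mod int t = int (nat (a mod int t))" using assms(1) by simp
  also have "w powi \<dots> = w ^ nat (a mod int t)" by (rule power_int_of_nat)
  finally show ?thesis by simp
qed

lemma sum_unit_roots_power_int:
  assumes "prime t"
  shows "(\<Sum>w\<in>unit_roots t. w powi a) = (if int t dvd a then of_nat t else 0)"
proof -
  have t: "1 < t" using assms prime_gt_1_nat by blast
  define k where "k = nat (a mod int t)"
  have pow: "w powi a = w ^ k" if "w \<in> unit_roots t" for w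
    using that t power_int_unit_root[of t w a] by (simp add: unit_roots_def k_def)
  show ?thesis
  proof (cases "int t dvd a")
    case True
    hence "k = 0" by (simp add: k_def)
    thus ?thesis using True pow t card_unit_roots[of t] by simp
  next
    case False
    hence "0 < a mod int t" using t by (simp add: dvd_eq_mod_eq_0 order_le_neq_trans)
    hence k: "0 < k" "k < t" using t by (auto simp: k_def nat_less_iff)
    have "(\<Sum>w\<in>unit_roots t. w powi a) = (\<Sum>w\<in>unit_roots t. w ^ k)" by (simp add: pow)
    also have "\<dots> = \<Sum>(unit_roots t)"
      using sum.reindex_bij_betw[OF bij_betw_power_unit_roots[OF assms k], of id] by simp
    also have "\<dots> = 0" using sum_roots_unity[OF t] by (simp add: unit_roots_def)
    finally show ?thesis using False by simp
  qed
qed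

lemma bij_betw_powers_unit_roots:
  fixes z :: complex
  assumes "prime t" "z \<in> unit_roots t" "z \<noteq> 1"
  shows "bij_betw (\<lambda>c. z^c) {1..t-1} (unit_roots t - {1})"
proof -
  have t: "1 < t" using assms(1) prime_gt_1_nat by blast
  have z0: "z \<noteq> 0" using assms(2) t by (auto simp: unit_roots_def zero_power)
  have eq_less: "a = b" if "z^a = z^b" "a \<le> b" "b < t" for a b
  proof (rule ccontr)
    assume "a \<noteq> b"
    have "z^a * z^(b-a) = z^a * 1" using that by (metis le_add_diff_inverse mult_1_right power_add)
    hence "z^(b-a) = 1" using z0 by simp
    moreover have "0 < b - a" "b - a < t" using \<open>a \<noteq> b\<close> that by auto
    ultimately show False using unit_root_power_eq_1_prime[OF assms(1,2)] assms(3) by blast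
  qed
  have inj: "inj_on (\<lambda>c. z^c) {1..t-1}"
  proof (rule inj_onI)
    fix a b assume "a \<in> {1..t-1}" "b \<in> {1..t-1}" and eq: "z^a = z^b"
    then have "a < t" "b < t" using t by auto
    then show "a = b"
      using eq_less[OF eq] eq_less[OF eq[symmetric]] by (cases "a \<le> b") auto
  qed
  have "(\<lambda>c. z^c) ` {1..t-1} \<subseteq> unit_roots t - {1}"
  proof
    fix w assume "w \<in> (\<lambda>c. z^c) ` {1..t-1}"
    then obtain c where c: "c \<in> {1..t-1}" "w = z^c" by auto
    have "w^t = (z^t)^c" unfolding c(2) by (simp only: power_mult[symmetric] mult.commute)
    moreover have "0 < c" "c < t" using c t by auto
    hence "w \<noteq> 1" using c(2) unit_root_power_eq_1_prime[OF assms(1,2), of c] assms(3) by auto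
    ultimately show "w \<in> unit_roots t - {1}" using assms(2) by (simp add: unit_roots_def)
  qed
  moreover have "card ((\<lambda>c. z^c) ` {1..t-1}) = card (unit_roots t - {1})"
    using inj t by (simp add: card_image card_unit_roots one_in_unit_roots finite_unit_roots)
  ultimately have "(\<lambda>c. z^c) ` {1..t-1} = unit_roots t - {1}"
    using t by (intro card_subset_eq) (auto simp: finite_unit_roots)
  thus ?thesis using inj by (simp add: bij_betw_def)
qed

lemma prod_unit_roots_poly:
  assumes t: "0 < t"
  shows "(\<Prod>w\<in>unit_roots t. [:1, -w:]) = 1 - monom 1 t"
proof (rule poly_eqI_degree[of "insert 0 (unit_roots t)"])
  have fin: "finite (unit_roots t)" using finite_unit_roots t .
  have z: "0 \<notin> unit_roots t" using t by (simp add: unit_roots_def zero_power)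
  show "card (insert 0 (unit_roots t)) > degree (\<Prod>w\<in>unit_roots t. [:1, -w:])"
  proof -
    have "degree (\<Prod>w\<in>unit_roots t. [:1, -w:]) \<le> (\<Sum>w\<in>unit_roots t. degree [:1, -w:])"
      using degree_prod_sum_le[OF fin, of "\<lambda>w. [:1,-w:]"] unfolding o_def .
    also have "\<dots> \<le> (\<Sum>w\<in>unit_roots t. 1)" by (intro sum_mono) simp
    also have "\<dots> = t" using card_unit_roots[OF t] by simp
    finally show ?thesis using fin z card_unit_roots[OF t] by simp
  qed
  show "card (insert 0 (unit_roots t)) > degree (1 - monom 1 t :: complex poly)"
  proof -
    have "degree (1 - monom 1 t :: complex poly) \<le> t"
      by (intro degree_diff_le) (auto simp: degree_monom_le)
    thus ?thesis using fin z card_unit_roots[OF t] by simp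
  qed
  fix x assume x: "x \<in> insert 0 (unit_roots t)"
  show "poly (\<Prod>w\<in>unit_roots t. [:1, -w:]) x = poly (1 - monom 1 t) x"
  proof (cases "x = 0")
    case True
    then show ?thesis using t by (simp add: poly_prod poly_monom)
  next
    case False
    with x have xr: "x^t = 1" by (simp add: unit_roots_def)
    have ir: "inverse x \<in> unit_roots t" using xr by (simp add: unit_roots_def power_inverse)
    have "poly (\<Prod>w\<in>unit_roots t. [:1, -w:]) x = (\<Prod>w\<in>unit_roots t. 1 - w * x)"
      by (simp add: poly_prod mult.commute)
    also have "\<dots> = 0"
      using fin ir False by (auto simp: prod_zero_iff intro!: bexI[of _ "inverse x"])
    finally show ?thesis using xr by (simp add: poly_monom)
  qed
qed

lemma fps_of_poly_linear_compose:
  fixes y :: "complex fps"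
  assumes "y $ 0 = 0"
  shows "fps_of_poly [:1, -w:] oo y = 1 - fps_const w * y"
proof -
  have "fps_of_poly [:1, -w:] = 1 - fps_const w * fps_X"
    by (simp add: fps_of_poly_pCons fps_const_neg[symmetric] del: fps_const_neg)
  hence "fps_of_poly [:1, -w:] oo y = (1 oo y) - (fps_const w * fps_X oo y)"
    by (simp add: fps_compose_sub_distrib)
  also have "\<dots> = 1 - fps_const w * y"
    using assms by (simp add: fps_const_mult_apply_left[symmetric])
  finally show ?thesis .
qed

lemma prod_unit_roots_fps:
  fixes y :: "complex fps"
  assumes t: "0 < t" and y: "y $ 0 = 0"
  shows "(\<Prod>w\<in>unit_roots t. 1 - fps_const w * y) = 1 - y^t"
proof -
  have "(\<Prod>w\<in>unit_roots t. 1 - fps_const w * y) = (\<Prod>w\<in>unit_roots t. fps_of_poly [:1, -w:] oo y)"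
    using fps_of_poly_linear_compose[OF y] by simp
  also have "\<dots> = fps_of_poly (\<Prod>w\<in>unit_roots t. [:1, -w:]) oo y"
    by (simp only: fps_of_poly_prod fps_compose_prod_distrib[OF y])
  also have "\<dots> = (1 oo y) - (fps_X^t oo y)"
    by (simp add: prod_unit_roots_poly[OF t] fps_of_poly_diff fps_of_poly_monom'
        fps_compose_sub_distrib)
  also have "\<dots> = 1 - y^t"
    using y by (simp add: fps_compose_power[OF y, symmetric])
  finally show ?thesis .
qed

text \<open>Over all \<open>t\<close>-th roots of unity, \<open>\<Prod>\<^sub>w (1 \<mp> w q\<^sup>s) = 1 \<mp> q\<^sup>t\<^sup>s\<close> (as \<open>t\<close> is odd),
  so the product of the factors \<open>(1 + w q\<^sup>s) / (1 - w q\<^sup>s)\<close> over \<open>w \<noteq> 1\<close> is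
  \<open>(1 + q\<^sup>t\<^sup>s) / (1 - q\<^sup>t\<^sup>s) \<cdot> (1 - q\<^sup>s) / (1 + q\<^sup>s)\<close>.\<close>

lemma prod_unit_roots_op_factor:
  assumes t: "1 < t" "odd t" and s0: "0 < s"
  shows "(\<Prod>w\<in>unit_roots t - {1}. op_factor w s) = op_factor 1 (t*s) * op_factor (-1) s"
proof -
  have t0: "0 < t" using t by simp
  have fin: "finite (unit_roots t)" using finite_unit_roots t0 .
  define u where "u w = 1 - fps_const w * q^s" for w
  define v where "v w = 1 + fps_const w * q^s" for w
  define D where "D = (\<Prod>w\<in>unit_roots t. u w) * v 1"
  have U: "(\<Prod>w\<in>unit_roots t. u w) = 1 - q^(t*s)"
    unfolding u_def using prod_unit_roots_fps[OF t0, of "q^s"] s0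
    by (simp add: power_mult mult.commute)
  have V: "(\<Prod>w\<in>unit_roots t. v w) = 1 + q^(t*s)"
  proof -
    have "(\<Prod>w\<in>unit_roots t. 1 - fps_const w * (-(q^s))) = 1 - (-(q^s))^t"
      using prod_unit_roots_fps[OF t0, of "-(q^s)"] s0 by simp
    moreover have "(-(q^s))^t = -(q^(t*s))" using t(2) by (simp add: power_mult mult.commute)
    ultimately show ?thesis unfolding v_def by simp
  qed
  have split: "(\<Prod>w\<in>unit_roots t. f w) = (\<Prod>w\<in>unit_roots t - {1}. f w) * f 1"
    for f :: "complex \<Rightarrow> complex fps"
    using prod.remove[OF fin one_in_unit_roots, of f] by (simp add: mult.commute)
  have "D $ 0 = 1" using t0 s0 by (simp add: D_def U v_def)
  hence D0: "D \<noteq> 0" by auto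
  have "(\<Prod>w\<in>unit_roots t - {1}. op_factor w s) * D
      = (\<Prod>w\<in>unit_roots t - {1}. op_factor w s * u w) * (u 1 * v 1)"
    by (simp add: D_def split[of u] prod.distrib mult_ac)
  also have "\<dots> = (\<Prod>w\<in>unit_roots t - {1}. v w) * (u 1 * v 1)"
    using op_factor_mult[OF s0] by (simp add: u_def v_def)
  also have "\<dots> = (\<Prod>w\<in>unit_roots t. v w) * u 1"
    by (simp add: split[of v] mult_ac)
  also have "\<dots> = (op_factor 1 (t*s) * (1 - q^(t*s))) * (op_factor (-1) s * v 1)"
    using op_factor_mult[of "t*s" 1] op_factor_minus_one_mult[OF s0] s0 t0 V
    by (simp add: u_def v_def)
  also have "\<dots> = (op_factor 1 (t*s) * op_factor (-1) s) * D"
    by (simp add: D_def U mult_ac)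
  finally show ?thesis using D0 by simp
qed

definition size_configs :: "'i set \<Rightarrow> ('i \<Rightarrow> 'v \<Rightarrow> nat) \<Rightarrow> 'v set \<Rightarrow> nat \<Rightarrow> ('i \<Rightarrow> 'v) set" where
  "size_configs I sz V m = {g. g \<in> I \<rightarrow>\<^sub>E V \<and> (\<Sum>i\<in>I. sz i (g i)) = m}"

definition gen_fps :: "('v \<Rightarrow> nat) \<Rightarrow> ('v \<Rightarrow> 'a::comm_semiring_1) \<Rightarrow> 'v set \<Rightarrow> 'a fps" where
  "gen_fps sz wt V = Abs_fps (\<lambda>n. \<Sum>v\<in>{v\<in>V. sz v = n}. wt v)"

lemma finite_size_configs:
  assumes "finite I" "\<And>i n. i \<in> I \<Longrightarrow> finite {v\<in>V. sz i v = n}"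
  shows "finite (size_configs I sz V m)"
proof -
  have f: "finite {v\<in>V. sz i v \<le> m}" if "i \<in> I" for i
  proof -
    have "{v\<in>V. sz i v \<le> m} = (\<Union>k\<le>m. {v\<in>V. sz i v = k})" by auto
    thus ?thesis using assms(2)[OF that] by simp
  qed
  have "size_configs I sz V m \<subseteq> PiE I (\<lambda>i. {v\<in>V. sz i v \<le> m})"
  proof
    fix g assume g: "g \<in> size_configs I sz V m"
    hence gi: "g \<in> I \<rightarrow>\<^sub>E V" and s: "(\<Sum>i\<in>I. sz i (g i)) = m" by (auto simp: size_configs_def)
    have "sz i (g i) \<le> m" if "i \<in> I" for i
      using member_le_sum[of i I "\<lambda>i. sz i (g i)"] that assms(1) s by simp
    thus "g \<in> PiE I (\<lambda>i. {v\<in>V. sz i v \<le> m})" using gi by (auto simp: PiE_def Pi_def)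
  qed
  moreover have "finite (PiE I (\<lambda>i. {v\<in>V. sz i v \<le> m}))"
    using assms(1) f by (intro finite_PiE) auto
  ultimately show ?thesis by (rule finite_subset)
qed

lemma bij_betw_size_configs_insert:
  assumes "finite I" "a \<notin> I"
  shows "bij_betw (\<lambda>(j,(v,g)). g(a := v))
           (SIGMA j:{0..n}. {v\<in>V. sz a v = j} \<times> size_configs I sz V (n - j))
           (size_configs (insert a I) sz V n)"
proof (rule bij_betw_byWitness[where f' = "\<lambda>g. (sz a (g a), (g a, restrict g I))"])
  have sum_upd: "(\<Sum>i\<in>I. sz i ((h(a := v)) i)) = (\<Sum>i\<in>I. sz i (h i))" for h v
    using assms(2) by (intro sum.cong) auto
  have sum_restrict: "(\<Sum>i\<in>I. sz i (restrict g I i)) = (\<Sum>i\<in>I. sz i (g i))" for g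
    by (intro sum.cong) auto
  show "\<forall>b\<in>SIGMA j:{0..n}. {v\<in>V. sz a v = j} \<times> size_configs I sz V (n - j).
      (\<lambda>g. (sz a (g a), (g a, restrict g I))) ((\<lambda>(j,(v,g)). g(a := v)) b) = b"
    using assms(2) by (auto simp: size_configs_def fun_eq_iff PiE_def extensional_def)
  show "\<forall>g\<in>size_configs (insert a I) sz V n.
      (\<lambda>(j,(v,g)). g(a := v)) (sz a (g a), (g a, restrict g I)) = g"
    by (auto simp: size_configs_def fun_eq_iff PiE_def extensional_def)
  show "(\<lambda>(j,(v,g)). g(a := v)) ` (SIGMA j:{0..n}. {v\<in>V. sz a v = j} \<times> size_configs I sz V (n - j))
      \<subseteq> size_configs (insert a I) sz V n"
    using assms sum_upd by (auto simp: size_configs_def PiE_def Pi_def extensional_def)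
  show "(\<lambda>g. (sz a (g a), (g a, restrict g I))) ` size_configs (insert a I) sz V n
      \<subseteq> (SIGMA j:{0..n}. {v\<in>V. sz a v = j} \<times> size_configs I sz V (n - j))"
    using assms sum_restrict by (auto simp: size_configs_def PiE_def Pi_def)
qed

lemma prod_gen_fps_nth:
  assumes "finite I" "\<And>i n. i \<in> I \<Longrightarrow> finite {v\<in>V. sz i v = n}"
  shows "(\<Prod>i\<in>I. gen_fps (sz i) (wt i) V) $ n = (\<Sum>g\<in>size_configs I sz V n. \<Prod>i\<in>I. wt i (g i))"
  using assms
proof (induction I arbitrary: n rule: finite_induct)
  case empty
  have "size_configs {} sz V n = (if n = 0 then {\<lambda>_. undefined} else {})"
    by (auto simp: size_configs_def)
  then show ?case by simp
next
  case (insert a I)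
  have finI: "finite (size_configs I sz V m)" for m using insert by (intro finite_size_configs) auto
  have fa: "finite {v\<in>V. sz a v = j}" for j using insert by auto
  have "(\<Prod>i\<in>insert a I. gen_fps (sz i) (wt i) V) $ n
      = (\<Sum>j=0..n. (\<Sum>v\<in>{v\<in>V. sz a v = j}. wt a v)
           * (\<Sum>g\<in>size_configs I sz V (n-j). \<Prod>i\<in>I. wt i (g i)))"
    using insert by (simp add: fps_mult_nth gen_fps_def)
  also have "\<dots> = (\<Sum>(j,(v,g))\<in>(SIGMA j:{0..n}. {v\<in>V. sz a v = j} \<times> size_configs I sz V (n - j)).
                     wt a v * (\<Prod>i\<in>I. wt i (g i)))"
    by (simp add: sum_product sum.cartesian_product sum.Sigma fa finI)
  also have "\<dots> = (\<Sum>(j,(v,g))\<in>(SIGMA j:{0..n}. {v\<in>V. sz a v = j} \<times> size_configs I sz V (n - j)).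
                     \<Prod>i\<in>insert a I. wt i ((g(a := v)) i))"
    using insert(1,2) by (intro sum.cong refl) (auto intro!: prod.cong arg_cong2[where f = times])
  also have "\<dots> = (\<Sum>g\<in>size_configs (insert a I) sz V n. \<Prod>i\<in>insert a I. wt i (g i))"
    using sum.reindex_bij_betw[OF bij_betw_size_configs_insert[OF insert(1,2)],
        of "\<lambda>g. \<Prod>i\<in>insert a I. wt i (g i)"]
    by (simp add: case_prod_unfold del: fun_upd_apply)
  finally show ?case .
qed

lemma mset_eq_sum_replicate_count:
  assumes "finite A" "set_mset M \<subseteq> A"
  shows "M = (\<Sum>s\<in>A. replicate_mset (count M s) s)"
proof (rule multiset_eqI)
  fix x
  have "count (\<Sum>s\<in>A. replicate_mset (count M s) s) x = (\<Sum>s\<in>A. if x = s then count M s else 0)"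
    by (simp add: count_sum count_replicate_mset)
  also have "\<dots> = (if x \<in> A then count M x else 0)" using assms(1) by (simp add: sum.delta')
  also have "\<dots> = count M x" using assms(2) by (auto simp: not_in_iff)
  finally show "count M x = count (\<Sum>s\<in>A. replicate_mset (count M s) s) x" by simp
qed

lemma sum_mset_sum: "sum_mset (\<Sum>s\<in>A. f s) = (\<Sum>s\<in>A. sum_mset (f s))"
  by (induction A rule: infinite_finite_induct) auto

lemma sum_mset_eq_sum_count:
  assumes "finite A" "set_mset M \<subseteq> A"
  shows "sum_mset M = (\<Sum>s\<in>A. count M s * s)"
  by (subst mset_eq_sum_replicate_count[OF assms]) (simp add: sum_mset_sum)

lemma size_eq_sum_count:
  assumes "finite A" "set_mset M \<subseteq> A"
  shows "size M = (\<Sum>s\<in>A. count M s)"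
  by (subst mset_eq_sum_replicate_count[OF assms]) simp

lemma count_sum_replicate_mset:
  assumes "finite A" "x \<in> A"
  shows "count (\<Sum>s\<in>A. replicate_mset (f s) s) x = f x"
  using assms by (simp add: count_sum count_replicate_mset sum.delta)

lemma set_mset_sum_replicate_mset:
  assumes "finite A"
  shows "set_mset (\<Sum>s\<in>A. replicate_mset (f s) s) = {s\<in>A. 0 < f s}"
proof -
  have "x \<in># (\<Sum>s\<in>A. replicate_mset (f s) s) \<longleftrightarrow> x \<in> A \<and> 0 < f x" for x
    using assms by (simp add: count_sum count_replicate_mset sum.delta flip: count_greater_zero_iff)
  thus ?thesis by auto
qed


lemma sum_pairs_complement_odd:
  fixes f :: "nat \<Rightarrow> 'a::comm_monoid_add"
  assumes "odd t"
  shows "(\<Sum>c\<in>{1..t-1}. f c) = (\<Sum>k\<in>{1..(t-1) div 2}. f k + f (t - k))"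
proof -
  define h where "h = (t-1) div 2"
  have t: "t = 2*h+1" using assms by (simp add: h_def)
  have inj: "inj_on (\<lambda>k. t - k) {1..h}" using t by (auto simp: inj_on_def)
  have image: "(\<lambda>k. t - k) ` {1..h} = {h+1..t-1}"
  proof
    show "{h+1..t-1} \<subseteq> (\<lambda>k. t - k) ` {1..h}"
    proof
      fix c assume "c \<in> {h+1..t-1}"
      hence "c = t - (t - c)" "t - c \<in> {1..h}" using t by auto
      thus "c \<in> (\<lambda>k. t - k) ` {1..h}" by blast
    qed
  qed (use t in auto)
  have "{1..t-1} = {1..h} \<union> {h+1..t-1}" using t by auto
  hence "(\<Sum>c\<in>{1..t-1}. f c) = (\<Sum>k\<in>{1..h}. f k) + (\<Sum>c\<in>{h+1..t-1}. f c)"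
    by (simp add: sum.union_disjoint[symmetric] ivl_disj_int_two)
  also have "(\<Sum>c\<in>{h+1..t-1}. f c) = (\<Sum>k\<in>{1..h}. f (t - k))"
    using sum.reindex[OF inj, of f] image by simp
  finally show ?thesis by (simp add: h_def sum.distrib)
qed

lemma multirank_cong:
  assumes "odd t"
  shows "[multirank t F = (\<Sum>c\<in>{1..t-1}. int c * int (op_len (F c)))] (mod int t)"
proof -
  define len where "len c = int (op_len (F c))" for c
  have "(\<Sum>c\<in>{1..t-1}. int c * len c)
      = (\<Sum>k\<in>{1..(t-1) div 2}. int k * len k + int (t - k) * len (t - k))"
    using sum_pairs_complement_odd[OF assms] .
  also have "\<dots> = multirank t F + int t * (\<Sum>k\<in>{1..(t-1) div 2}. len (t - k))"
    unfolding multirank_def len_def[symmetric] sum_distrib_left sum.distrib[symmetric]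
    by (intro sum.cong refl) (auto simp: of_nat_diff algebra_simps)
  finally show ?thesis unfolding len_def by (simp add: cong_iff_dvd_diff)
qed

lemma power_int_cong_unit_root:
  fixes w :: complex
  assumes "0 < t" "w^t = 1" "[a = b] (mod int t)"
  shows "w powi a = w powi b"
  using assms power_int_unit_root[OF assms(1,2)] by (simp add: cong_def)

lemma power_int_multirank:
  fixes z :: complex
  assumes "odd t" "z^t = 1"
  shows "z powi (multirank t F) = (\<Prod>c\<in>{1..t-1}. (z^c)^(op_len (F c)))"
proof -
  have "0 < t" using assms(1) by (rule odd_pos)
  hence "z powi (multirank t F) = z powi (\<Sum>c\<in>{1..t-1}. int c * int (op_len (F c)))"
    using assms multirank_cong by (blast intro: power_int_cong_unit_root)
  also have "\<dots> = z ^ (\<Sum>c\<in>{1..t-1}. c * op_len (F c))"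
    by (simp flip: power_int_of_nat)
  finally show ?thesis by (simp add: power_sum power_mult)
qed

section \<open>Colored overpartitions as functions on cells\<close>

text \<open>A cell \<open>(s, c)\<close> is a part size \<open>s\<close> in colour \<open>c\<close>; its state \<open>(m, b)\<close> records the
  multiplicity \<open>m\<close> of \<open>s\<close> in the \<open>c\<close>-th overpartition and whether \<open>s\<close> is overlined there.\<close>

definition cells :: "nat \<Rightarrow> nat \<Rightarrow> (nat \<times> nat) set" where
  "cells t n = {1..n} \<times> {1..t-1}"

definition cell_states :: "(nat \<times> bool) set" where
  "cell_states = {(m, b). b \<longrightarrow> 0 < m}"

definition cell_size :: "nat \<times> nat \<Rightarrow> nat \<times> bool \<Rightarrow> nat" where
  "cell_size i v = fst i * fst v"

definition cell_weight :: "complex \<Rightarrow> nat \<times> nat \<Rightarrow> nat \<times> bool \<Rightarrow> complex" where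
  "cell_weight z i v = (z ^ snd i) ^ fst v"

definition to_cells :: "nat \<Rightarrow> nat \<Rightarrow> (nat \<Rightarrow> overpartition) \<Rightarrow> nat \<times> nat \<Rightarrow> nat \<times> bool" where
  "to_cells t n F = restrict (\<lambda>(s,c). (count (fst (F c)) s, s \<in> snd (F c))) (cells t n)"

definition of_cells :: "nat \<Rightarrow> nat \<Rightarrow> (nat \<times> nat \<Rightarrow> nat \<times> bool) \<Rightarrow> nat \<Rightarrow> overpartition" where
  "of_cells t n g = restrict (\<lambda>c. (\<Sum>s\<in>{1..n}. replicate_mset (fst (g (s,c))) s,
                                    {s\<in>{1..n}. snd (g (s,c))})) {1..t-1}"

lemma member_le_sum_mset: "(x::nat) \<in># M \<Longrightarrow> x \<le> sum_mset M"
  by (metis le_add1 multi_member_split sum_mset.add_mset)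

lemma colored_overpartition_parts:
  assumes "F \<in> colored_overpartitions t n" "c \<in> {1..t-1}"
  shows "is_overpartition (F c)" "set_mset (fst (F c)) \<subseteq> {1..n}"
proof -
  show op: "is_overpartition (F c)"
    using assms by (auto simp: colored_overpartitions_def PiE_def Pi_def)
  have "op_size (F c) \<le> (\<Sum>k\<in>{1..t-1}. op_size (F k))"
    using assms(2) by (intro member_le_sum) auto
  hence le: "op_size (F c) \<le> n" using assms(1) by (simp add: colored_overpartitions_def)
  show "set_mset (fst (F c)) \<subseteq> {1..n}"
  proof
    fix x assume x: "x \<in># fst (F c)"
    have "x \<noteq> 0" using x op by (metis is_overpartition_def)
    moreover have "x \<le> n" using member_le_sum_mset[OF x] le by (simp add: op_size_def)
    ultimately show "x \<in> {1..n}" by simp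
  qed
qed

lemma to_cells_in_size_configs:
  assumes F: "F \<in> colored_overpartitions t n"
  shows "to_cells t n F \<in> size_configs (cells t n) cell_size cell_states n"
proof -
  have "to_cells t n F \<in> cells t n \<rightarrow>\<^sub>E cell_states"
    using colored_overpartition_parts(1)[OF F]
    by (fastforce simp: to_cells_def cells_def cell_states_def is_overpartition_def)
  moreover have "(\<Sum>i\<in>cells t n. cell_size i (to_cells t n F i)) = n"
  proof -
    have "(\<Sum>i\<in>cells t n. cell_size i (to_cells t n F i))
        = (\<Sum>(s,c)\<in>{1..n} \<times> {1..t-1}. s * count (fst (F c)) s)"
      unfolding cells_def by (intro sum.cong refl) (auto simp: cell_size_def to_cells_def cells_def)
    also have "\<dots> = (\<Sum>c\<in>{1..t-1}. \<Sum>s\<in>{1..n}. count (fst (F c)) s * s)"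
      by (simp add: sum.cartesian_product[symmetric] mult.commute) (rule sum.swap)
    also have "\<dots> = (\<Sum>c\<in>{1..t-1}. op_size (F c))"
      using sum_mset_eq_sum_count[OF _ colored_overpartition_parts(2)[OF F]]
      by (simp add: op_size_def)
    finally show ?thesis using F by (simp add: colored_overpartitions_def)
  qed
  ultimately show ?thesis by (simp add: size_configs_def)
qed

lemma of_cells_to_cells:
  assumes F: "F \<in> colored_overpartitions t n"
  shows "of_cells t n (to_cells t n F) = F"
proof
  fix c
  show "of_cells t n (to_cells t n F) c = F c"
  proof (cases "c \<in> {1..t-1}")
    case True
    have "(\<Sum>s\<in>{1..n}. replicate_mset (fst (to_cells t n F (s,c))) s)
        = (\<Sum>s\<in>{1..n}. replicate_mset (count (fst (F c)) s) s)"
      using True by (intro sum.cong refl) (simp add: to_cells_def cells_def)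
    also have "\<dots> = fst (F c)"
      using mset_eq_sum_replicate_count[OF _ colored_overpartition_parts(2)[OF F True]] by simp
    finally have "(\<Sum>s\<in>{1..n}. replicate_mset (fst (to_cells t n F (s,c))) s) = fst (F c)" .
    moreover have "{s\<in>{1..n}. snd (to_cells t n F (s,c))} = {s\<in>{1..n}. s \<in> snd (F c)}"
      using True by (auto simp: to_cells_def cells_def)
    moreover have "snd (F c) \<subseteq> {1..n}"
      using colored_overpartition_parts[OF F True] by (auto simp: is_overpartition_def)
    ultimately show ?thesis using True by (auto simp: of_cells_def prod_eq_iff)
  next
    case False
    then show ?thesis using F
      by (auto simp: of_cells_def colored_overpartitions_def PiE_def extensional_def)
  qed
qed

lemma of_cells_in_colored_overpartitions:
  assumes g: "g \<in> size_configs (cells t n) cell_size cell_states n"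
  shows "of_cells t n g \<in> colored_overpartitions t n"
proof -
  have gE: "g \<in> cells t n \<rightarrow>\<^sub>E cell_states" and gs: "(\<Sum>i\<in>cells t n. cell_size i (g i)) = n"
    using g by (auto simp: size_configs_def)
  have "is_overpartition (of_cells t n g c)" if c: "c \<in> {1..t-1}" for c
  proof -
    have "set_mset (fst (of_cells t n g c)) = {s\<in>{1..n}. 0 < fst (g (s,c))}"
      using c by (simp add: of_cells_def set_mset_sum_replicate_mset)
    moreover have "snd (g (s,c)) \<Longrightarrow> 0 < fst (g (s,c))" if "s \<in> {1..n}" for s
      using gE that c by (force simp: cells_def cell_states_def PiE_def Pi_def)
    ultimately show ?thesis using c by (auto simp: is_overpartition_def of_cells_def)
  qed
  moreover have "(\<Sum>c\<in>{1..t-1}. op_size (of_cells t n g c)) = n"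
  proof -
    have "(\<Sum>c\<in>{1..t-1}. op_size (of_cells t n g c)) = (\<Sum>c\<in>{1..t-1}. \<Sum>s\<in>{1..n}. s * fst (g (s,c)))"
      by (simp add: of_cells_def op_size_def sum_mset_sum mult.commute)
    also have "\<dots> = (\<Sum>i\<in>cells t n. cell_size i (g i))"
      by (subst sum.swap) (simp add: cells_def sum.cartesian_product cell_size_def case_prod_beta)
    finally show ?thesis using gs by simp
  qed
  ultimately show ?thesis
    by (auto simp: colored_overpartitions_def of_cells_def)
qed

lemma to_cells_of_cells:
  assumes g: "g \<in> size_configs (cells t n) cell_size cell_states n"
  shows "to_cells t n (of_cells t n g) = g"
proof
  fix i
  have gE: "g \<in> cells t n \<rightarrow>\<^sub>E cell_states" using g by (simp add: size_configs_def)
  show "to_cells t n (of_cells t n g) i = g i"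
  proof (cases "i \<in> cells t n")
    case True
    then obtain s c where i: "i = (s,c)" "s \<in> {1..n}" "c \<in> {1..t-1}" by (auto simp: cells_def)
    have "count (\<Sum>s'\<in>{1..n}. replicate_mset (fst (g (s',c))) s') s = fst (g (s,c))"
      using i by (intro count_sum_replicate_mset) auto
    thus ?thesis unfolding i(1) using i(2,3) by (simp add: to_cells_def of_cells_def cells_def)
  next
    case False
    then show ?thesis using gE by (cases i) (auto simp: to_cells_def PiE_def extensional_def)
  qed
qed

lemma bij_betw_to_cells:
  "bij_betw (to_cells t n) (colored_overpartitions t n) (size_configs (cells t n) cell_size cell_states n)"
  by (rule bij_betw_byWitness[where f' = "of_cells t n"])
    (auto simp: of_cells_to_cells to_cells_of_cells to_cells_in_size_configs
                of_cells_in_colored_overpartitions)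

lemma finite_cell_fiber:
  assumes "i \<in> cells t n"
  shows "finite {v\<in>cell_states. cell_size i v = k}"
proof -
  obtain s c where i: "i = (s,c)" "1 \<le> s" using assms by (auto simp: cells_def)
  have "{v\<in>cell_states. cell_size i v = k} \<subseteq> {..k} \<times> UNIV"
    using i by (auto simp: cell_size_def)
  thus ?thesis by (rule finite_subset) simp
qed

lemma finite_colored_overpartitions: "finite (colored_overpartitions t n)"
proof -
  have "finite (size_configs (cells t n) cell_size cell_states n)"
    by (intro finite_size_configs finite_cell_fiber) (auto simp: cells_def)
  thus ?thesis using bij_betw_finite[OF bij_betw_to_cells] by simp
qed

lemma prod_cell_weight_to_cells:
  assumes F: "F \<in> colored_overpartitions t n" and t: "odd t" and z: "z^t = 1"
  shows "(\<Prod>i\<in>cells t n. cell_weight z i (to_cells t n F i)) = z powi (multirank t F)"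
proof -
  have "(\<Prod>i\<in>cells t n. cell_weight z i (to_cells t n F i))
      = (\<Prod>(s,c)\<in>{1..n} \<times> {1..t-1}. (z^c)^(count (fst (F c)) s))"
    unfolding cells_def by (intro prod.cong refl) (auto simp: cell_weight_def to_cells_def cells_def)
  also have "\<dots> = (\<Prod>c\<in>{1..t-1}. (z^c)^(\<Sum>s\<in>{1..n}. count (fst (F c)) s))"
    by (simp add: prod.cartesian_product[symmetric] power_sum) (rule prod.swap)
  also have "\<dots> = (\<Prod>c\<in>{1..t-1}. (z^c)^(op_len (F c)))"
    using size_eq_sum_count[OF _ colored_overpartition_parts(2)[OF F]] by (simp add: op_len_def)
  also have "\<dots> = z powi (multirank t F)" using power_int_multirank[OF t z] by simp
  finally show ?thesis .
qed

lemma gen_fps_cell: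
  assumes s: "0 < s"
  shows "gen_fps (cell_size (s,c)) (cell_weight z (s,c)) cell_states = op_factor (z^c) s"
proof (rule fps_ext)
  fix k
  have "(\<Sum>v\<in>{v\<in>cell_states. cell_size (s,c) v = k}. cell_weight z (s,c) v) = op_factor (z^c) s $ k"
  proof (cases "k = 0")
    case True
    have "{v\<in>cell_states. cell_size (s,c) v = k} = {(0,False)}"
      using True s by (auto simp: cell_states_def cell_size_def)
    then show ?thesis using True by (simp add: op_factor_def cell_weight_def)
  next
    case k0: False
    show ?thesis
    proof (cases "s dvd k")
      case True
      then obtain r where r: "k = s * r" by blast
      have "{v\<in>cell_states. cell_size (s,c) v = k} = {(r,False),(r,True)}"
        using r s k0 by (auto simp: cell_states_def cell_size_def)
      moreover have "k div s = r" using r s by simp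
      ultimately show ?thesis using k0 True by (simp add: op_factor_def cell_weight_def power_mult)
    next
      case False
      have "{v\<in>cell_states. cell_size (s,c) v = k} = {}"
        using False by (auto simp: cell_states_def cell_size_def)
      then show ?thesis using False k0 by (simp only: sum.empty) (simp add: op_factor_def)
    qed
  qed
  thus "gen_fps (cell_size (s,c)) (cell_weight z (s,c)) cell_states $ k = op_factor (z^c) s $ k"
    by (simp add: gen_fps_def)
qed

lemma sum_colored_overpartitions_power_int_multirank:
  assumes t: "odd t" and z: "z^t = 1"
  shows "(\<Sum>F\<in>colored_overpartitions t n. z powi (multirank t F))
       = (\<Prod>s\<in>{1..n}. \<Prod>c\<in>{1..t-1}. op_factor (z^c) s) $ n"
proof -
  have "(\<Sum>F\<in>colored_overpartitions t n. z powi (multirank t F))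
      = (\<Sum>F\<in>colored_overpartitions t n. \<Prod>i\<in>cells t n. cell_weight z i (to_cells t n F i))"
    using prod_cell_weight_to_cells[OF _ t z] by simp
  also have "\<dots> = (\<Sum>g\<in>size_configs (cells t n) cell_size cell_states n.
                     \<Prod>i\<in>cells t n. cell_weight z i (g i))"
    by (rule sum.reindex_bij_betw[OF bij_betw_to_cells])
  also have "\<dots> = (\<Prod>i\<in>cells t n. gen_fps (cell_size i) (cell_weight z i) cell_states) $ n"
    by (rule prod_gen_fps_nth[symmetric]) (auto simp: cells_def intro: finite_cell_fiber)
  also have "(\<Prod>i\<in>cells t n. gen_fps (cell_size i) (cell_weight z i) cell_states)
      = (\<Prod>s\<in>{1..n}. \<Prod>c\<in>{1..t-1}. op_factor (z^c) s)"
    unfolding cells_def prod.cartesian_product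
    by (intro prod.cong refl) (auto simp: gen_fps_cell split: prod.splits)
  finally show ?thesis .
qed

section \<open>Vanishing of the twisted sums\<close>

definition fps_supported_on_multiples :: "nat \<Rightarrow> 'a::comm_ring_1 fps \<Rightarrow> bool" where
  "fps_supported_on_multiples t f \<longleftrightarrow> (\<forall>k. \<not> t dvd k \<longrightarrow> f $ k = 0)"

lemma fps_supported_on_multiples_mult:
  assumes "fps_supported_on_multiples t f" "fps_supported_on_multiples t g"
  shows "fps_supported_on_multiples t (f * g)"
  unfolding fps_supported_on_multiples_def fps_mult_nth
proof (intro allI impI sum.neutral ballI)
  fix k i assume k: "\<not> t dvd k" and i: "i \<in> {0..k}"
  show "f $ i * g $ (k - i) = 0"
  proof (cases "t dvd i")
    case True
    hence "\<not> t dvd (k - i)" using k i by (metis atLeastAtMost_iff dvd_add le_add_diff_inverse)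
    then show ?thesis using assms(2) by (simp add: fps_supported_on_multiples_def)
  qed (use assms(1) in \<open>simp add: fps_supported_on_multiples_def\<close>)
qed

lemma fps_supported_on_multiples_prod:
  "(\<And>x. x \<in> A \<Longrightarrow> fps_supported_on_multiples t (f x)) \<Longrightarrow> fps_supported_on_multiples t (prod f A)"
  by (induction A rule: infinite_finite_induct)
    (auto simp: fps_supported_on_multiples_mult, auto simp: fps_supported_on_multiples_def)

lemma fps_supported_on_multiples_op_factor: "fps_supported_on_multiples t (op_factor 1 (t*s))"
  unfolding fps_supported_on_multiples_def op_factor_def by (auto dest: dvd_mult_left)

lemma not_square_diff_multiple_of_nonresidue:
  assumes "\<not> QuadRes (int t) (int n)" "t dvd i" "i \<le> n"
  shows "n - i \<noteq> a^2"
proof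
  assume sq: "n - i = a^2"
  obtain r where "i = t * r" using assms(2) by blast
  hence "n = a^2 + t * r" using sq assms(3) by simp
  hence "int n = int a ^ 2 + int t * int r" by simp
  hence "[int a ^ 2 = int n] (mod int t)" by (simp add: cong_iff_dvd_diff)
  thus False using assms(1) unfolding QuadRes_def by blast
qed

lemma nth_mult_gauss_product_nonresidue:
  assumes "fps_supported_on_multiples t A" "\<not> QuadRes (int t) (int n)"
  shows "(A * gauss_product n) $ n = 0"
  unfolding fps_mult_nth
proof (intro sum.neutral ballI)
  fix i assume i: "i \<in> {0..n}"
  show "A $ i * gauss_product n $ (n - i) = 0"
  proof (cases "t dvd i")
    case True
    hence "gauss_product n $ (n - i) = 0"
      using i not_square_diff_multiple_of_nonresidue[OF assms(2)]
      by (intro gauss_product_nth_nonsquare) auto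
    then show ?thesis by simp
  qed (use assms(1) in \<open>simp add: fps_supported_on_multiples_def\<close>)
qed

lemma sum_power_int_multirank_eq_0:
  fixes z :: complex
  assumes t: "prime t" "odd t" and nonres: "\<not> QuadRes (int t) (int n)"
    and z: "z \<in> unit_roots t" "z \<noteq> 1"
  shows "(\<Sum>F\<in>colored_overpartitions t n. z powi (multirank t F)) = 0"
proof -
  have t1: "1 < t" using t(1) prime_gt_1_nat by blast
  have "(\<Prod>c\<in>{1..t-1}. op_factor (z^c) s) = op_factor 1 (t*s) * op_factor (-1) s"
    if "s \<in> {1..n}" for s
  proof -
    have "(\<Prod>c\<in>{1..t-1}. op_factor (z^c) s) = (\<Prod>w\<in>unit_roots t - {1}. op_factor w s)"
      using prod.reindex_bij_betw[OF bij_betw_powers_unit_roots[OF t(1) z], of "\<lambda>w. op_factor w s"]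
      by simp
    also have "\<dots> = op_factor 1 (t*s) * op_factor (-1) s"
      using that t1 t(2) by (intro prod_unit_roots_op_factor) auto
    finally show ?thesis .
  qed
  hence "(\<Prod>s\<in>{1..n}. \<Prod>c\<in>{1..t-1}. op_factor (z^c) s)
      = (\<Prod>s\<in>{1..n}. op_factor 1 (t*s)) * gauss_product n"
    by (simp add: prod.distrib gauss_product_def)
  moreover have "fps_supported_on_multiples t (\<Prod>s\<in>{1..n}. op_factor 1 (t*s))"
    by (intro fps_supported_on_multiples_prod fps_supported_on_multiples_op_factor)
  ultimately show ?thesis
    using sum_colored_overpartitions_power_int_multirank[OF t(2)] z(1)
      nth_mult_gauss_product_nonresidue[OF _ nonres]
    by (simp add: unit_roots_def)
qed

lemma card_multirank_class:
  assumes t: "prime t" "odd t" and nonres: "\<not> QuadRes (int t) (int n)"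
  shows "t * Nbar i t n = pbar t n"
proof -
  define C where "C = colored_overpartitions t n"
  have t0: "0 < t" using t(1) prime_gt_0_nat by blast
  have fin: "finite (unit_roots t)" using t0 by (rule finite_unit_roots)
  have w0: "w \<noteq> 0" if "w \<in> unit_roots t" for w
    using that t0 by (auto simp: unit_roots_def zero_power)
  have "complex_of_nat (t * Nbar i t n)
      = (\<Sum>F\<in>C. if int t dvd multirank t F - i then of_nat t else 0)"
    by (simp add: Nbar_def C_def cong_iff_dvd_diff finite_colored_overpartitions
        sum.If_cases Int_def)
  also have "\<dots> = (\<Sum>F\<in>C. \<Sum>w\<in>unit_roots t. w powi (multirank t F - i))"
    using sum_unit_roots_power_int[OF t(1)] by simp
  also have "\<dots> = (\<Sum>w\<in>unit_roots t. w powi (-i) * (\<Sum>F\<in>C. w powi (multirank t F)))"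
    by (subst sum.swap) (auto simp: sum_distrib_left w0 intro!: sum.cong simp flip: power_int_add)
  also have "\<dots> = (\<Sum>F\<in>C. 1 powi (multirank t F))
      + (\<Sum>w\<in>unit_roots t - {1}. w powi (-i) * (\<Sum>F\<in>C. w powi (multirank t F)))"
    by (subst sum.remove[OF fin one_in_unit_roots]) simp
  also have "\<dots> = of_nat (pbar t n)"
    using sum_power_int_multirank_eq_0[OF t nonres] by (simp add: C_def pbar_def)
  finally show ?thesis by (simp only: of_nat_eq_iff)
qed

section \<open>Parity\<close>

definition fps_one_plus_even :: "complex fps \<Rightarrow> bool" where
  "fps_one_plus_even f \<longleftrightarrow> f $ 0 = 1 \<and> (\<forall>k>0. f $ k / 2 \<in> \<int>)"

lemma fps_one_plus_even_nth_Ints: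
  assumes "fps_one_plus_even f"
  shows "f $ k \<in> \<int>"
proof (cases "k = 0")
  case False
  hence "2 * (f $ k / 2) \<in> \<int>" using assms by (intro Ints_mult) (auto simp: fps_one_plus_even_def)
  thus ?thesis by simp
qed (use assms in \<open>simp add: fps_one_plus_even_def\<close>)

lemma fps_one_plus_even_mult:
  assumes f: "fps_one_plus_even f" and g: "fps_one_plus_even g"
  shows "fps_one_plus_even (f * g)"
  unfolding fps_one_plus_even_def
proof (intro conjI allI impI)
  show "(f * g) $ 0 = 1" using f g by (simp add: fps_one_plus_even_def)
  fix k :: nat assume k: "0 < k"
  have "f $ i * g $ (k - i) / 2 \<in> \<int>" if "i \<in> {0..k}" for i
  proof (cases "i = 0")
    case True
    then show ?thesis using f g k by (simp add: fps_one_plus_even_def)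
  next
    case False
    hence "(f $ i / 2) * g $ (k - i) \<in> \<int>"
      using f fps_one_plus_even_nth_Ints[OF g] by (intro Ints_mult) (auto simp: fps_one_plus_even_def)
    then show ?thesis by simp
  qed
  hence "(\<Sum>i=0..k. f $ i * g $ (k - i) / 2) \<in> \<int>" by (intro Ints_sum)
  thus "(f * g) $ k / 2 \<in> \<int>" by (simp add: fps_mult_nth sum_divide_distrib)
qed

lemma fps_one_plus_even_prod:
  "(\<And>x. x \<in> A \<Longrightarrow> fps_one_plus_even (f x)) \<Longrightarrow> fps_one_plus_even (prod f A)"
  by (induction A rule: infinite_finite_induct)
    (auto simp: fps_one_plus_even_mult, auto simp: fps_one_plus_even_def)

lemma fps_one_plus_even_op_factor: "fps_one_plus_even (op_factor 1 s)"
  unfolding fps_one_plus_even_def op_factor_def by auto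

lemma even_pbar:
  assumes "odd t" "1 \<le> n"
  shows "even (pbar t n)"
proof -
  define P where "P = (\<Prod>s\<in>{1..n}. \<Prod>c\<in>{1..t-1}. op_factor 1 s)"
  have "complex_of_nat (pbar t n) = (\<Sum>F\<in>colored_overpartitions t n. 1 powi (multirank t F))"
    by (simp add: pbar_def)
  also have "\<dots> = P $ n"
    unfolding P_def using sum_colored_overpartitions_power_int_multirank[OF assms(1), of 1] by simp
  finally have pbar_P: "complex_of_nat (pbar t n) = P $ n" .
  have "fps_one_plus_even P"
    unfolding P_def by (intro fps_one_plus_even_prod fps_one_plus_even_op_factor)
  hence "complex_of_nat (pbar t n) / 2 \<in> \<int>"
    using assms(2) by (simp add: pbar_P fps_one_plus_even_def)
  then obtain m where "complex_of_nat (pbar t n) / 2 = of_int m" by (auto elim: Ints_cases)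
  hence "complex_of_int (int (pbar t n)) = complex_of_int (2 * m)" by (simp add: field_simps)
  hence "int (pbar t n) = 2 * m" by (simp only: of_int_eq_iff)
  thus ?thesis by presburger
qed

theorem theorem2p3:
  fixes t n :: nat
  assumes "prime t" and "odd t" and "n \<ge> 1"
    and "\<not> QuadRes (int t) (int n)"
  shows "(\<forall>i::int. 0 \<le> i \<and> i \<le> int t - 1 \<longrightarrow>
            real (Nbar i t n) = real (pbar t n) / real t \<and> even (Nbar i t n))
         \<and> (2 * t) dvd pbar t n"
proof -
  have t0: "0 < t" using assms(1) prime_gt_0_nat by blast
  have N: "t * Nbar i t n = pbar t n" for i
    using card_multirank_class[OF assms(1,2,4)] .
  have even_N: "even (Nbar i t n)" for i
    using even_pbar[OF assms(2,3)] N[of i] assms(2) by (metis even_mult_iff)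
  show ?thesis
  proof (intro conjI allI impI)
    fix i :: int
    show "real (Nbar i t n) = real (pbar t n) / real t"
      using N[of i] t0 by (simp add: field_simps flip: of_nat_mult)
    show "even (Nbar i t n)" by (rule even_N)
  next
    obtain k where "Nbar 0 t n = 2 * k" using even_N[of 0] by blast
    hence "pbar t n = (2 * t) * k" using N[of 0] by simp
    thus "(2 * t) dvd pbar t n" by simp
  qed
qed

end
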